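(* For $w\in\Sigma^*$ the following are equivalent: (i) $w$ contains no letter square; (ii) every scattered factor $u$ of $w$ with $|C(w,u)|=1$ has exactly one embedding in $w$.
   Context: A letter square of $w$ is a factor $\mathtt{a}\mathtt{a}$ of $w$ for some letter $\mathtt{a}\in\Sigma$. An embedding of $u$ in $w$ is a map $e:\{1,\dots,|u|\}\to\{1,\dots,|w|\}$ with $e(1)<\dots<e(|u|)$ and $u[i]=w[e(i)]$. The shuffle $\mathrm{Sh}(u,v)$ is the set of words of length $|u|+|v|$ admitting an embedding of $u$ and one of $v$ with disjoint images covering all positions, and $C(w,u)=\{v\in\Sigma^{|w|-|u|}: w\in\mathrm{Sh}(u,v)\}$. *)

theory Defs
  imports Main "HOL-Library.Sublist"
begin

text \<open>Words are lists over the alphabet type 'a. Positions are 0-indexed.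
An embedding of u in w is represented by the list of its images
e = [e(1),...,e(|u|)] (shifted to 0-based positions).\<close>

definition is_embedding :: "'a list \<Rightarrow> 'a list \<Rightarrow> nat list \<Rightarrow> bool" where
  "is_embedding u w e \<longleftrightarrow>
     length e = length u \<and> sorted_wrt (<) e \<and>
     (\<forall>i<length u. e ! i < length w \<and> u ! i = w ! (e ! i))"

definition embeddings :: "'a list \<Rightarrow> 'a list \<Rightarrow> nat list set" where
  "embeddings u w = {e. is_embedding u w e}"

definition scattered_factor :: "'a list \<Rightarrow> 'a list \<Rightarrow> bool" where
  "scattered_factor u w \<longleftrightarrow> embeddings u w \<noteq> {}"

definition shuffle_set :: "'a list \<Rightarrow> 'a list \<Rightarrow> 'a list set" where
  "shuffle_set u v = {w. length w = length u + length v \<and>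
     (\<exists>e f. is_embedding u w e \<and> is_embedding v w f \<and>
            set e \<inter> set f = {} \<and> set e \<union> set f = {..<length w})}"

definition Cset :: "'a list \<Rightarrow> 'a list \<Rightarrow> 'a list set" where
  "Cset w u = {v. length v = length w - length u \<and> w \<in> shuffle_set u v}"

definition has_letter_square :: "'a list \<Rightarrow> bool" where
  "has_letter_square w \<longleftrightarrow> (\<exists>a. sublist [a, a] w)"

end

theory Submission
  imports Defs "HOL-Library.Multiset"
begin

text \<open>The letters of w missed by an embedding e of u, i.e. the word nths w (- set e), form an
element of C(w,u). If w contains a letter square aa, deleting either a gives two embeddings of the
same u, while C(w,u) = {a} by counting letters. Conversely, let two embeddings of u first differ at
position k, say e'(k) = p < q = e(k). Moving the k-th position of e down to p gives a third
embedding; if its complement equals that of e, comparing the two complements at the first position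
where they can differ shows w[p] = w[p+1].\<close>

lemma is_embedding_iff:
  "is_embedding u w e \<longleftrightarrow> sorted_wrt (<) e \<and> set e \<subseteq> {..<length w} \<and> u = map ((!) w) e"
  unfolding is_embedding_def by (auto simp: in_set_conv_nth subset_iff intro!: nth_equalityI) blast

lemma nths_cong:
  assumes "\<And>i. i < length xs \<Longrightarrow> i \<in> A \<longleftrightarrow> i \<in> B"
  shows "nths xs A = nths xs B"
  unfolding nths_def using assms by (intro arg_cong[of _ _ "map fst"] filter_cong) (auto simp: set_zip)

lemma nths_eq_map_nth_filter:
  "nths w A = map ((!) w) (filter (\<lambda>i. i \<in> A) [0..<length w])"
proof -
  have "nths w A = map ((!) w) (nths [0..<length w] A)"
    by (metis map_nth nths_map)
  also have "nths [0..<length w] A = filter (\<lambda>i. i \<in> A) [0..<length w]"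
    unfolding filter_eq_nths by (rule nths_cong) simp
  finally show ?thesis .
qed

lemma complement_in_Cset:
  assumes "is_embedding u w e"
  shows "nths w (- set e) \<in> Cset w u"
proof -
  define f where "f = filter (\<lambda>i. i \<notin> set e) [0..<length w]"
  have e: "sorted_wrt (<) e" "set e \<subseteq> {..<length w}" "u = map ((!) w) e"
    using assms by (simp_all add: is_embedding_iff)
  have v: "nths w (- set e) = map ((!) w) f"
    by (simp add: nths_eq_map_nth_filter f_def)
  have set_f: "set f = {..<length w} - set e"
    by (auto simp: f_def)
  have "is_embedding (nths w (- set e)) w f"
    unfolding is_embedding_iff v set_f by (simp add: f_def sorted_wrt_filter)
  moreover have "length f = length w - length u"
  proof -
    have "length f = card ({..<length w} - set e)"
      by (metis set_f distinct_card distinct_filter distinct_upt f_def)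
    also have "\<dots> = length w - length u"
      using e by (simp add: card_Diff_subset distinct_card strict_sorted_iff)
    finally show ?thesis .
  qed
  moreover have "length u \<le> length w"
    using e card_mono[OF _ e(2)] by (simp add: distinct_card strict_sorted_iff)
  ultimately show ?thesis
    unfolding Cset_def shuffle_set_def using assms set_f e(2) v by auto
qed

lemma nth_eq_Suc_if_nths_complements_eq:
  assumes "Suc p < length w" "p \<notin> E" "p \<in> F" "Suc p \<notin> F"
    and "\<And>i. i < p \<Longrightarrow> i \<in> E \<longleftrightarrow> i \<in> F"
    and "nths w (- E) = nths w (- F)"
  shows "w ! p = w ! Suc p"
proof -
  define xs ys where "xs = take p w" and "ys = drop (Suc (Suc p)) w"
  have w: "w = xs @ w ! p # w ! Suc p # ys"
    using assms(1) by (simp add: xs_def ys_def Cons_nth_drop_Suc)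
  have len: "length xs = p"
    using assms(1) by (simp add: xs_def)
  have "nths xs (- E) = nths xs (- F)"
    using assms(5) len by (intro nths_cong) auto
  moreover have "nths w (- E) = nths xs (- E) @ w ! p # nths (w ! Suc p # ys) {j. Suc j + p \<in> - E}"
    using assms(2) len by (subst w) (simp add: nths_append nths_Cons)
  moreover have "nths w (- F) = nths xs (- F) @ w ! Suc p # nths ys {j. Suc (Suc j) + p \<in> - F}"
    using assms(3,4) len by (subst w) (simp add: nths_append nths_Cons)
  ultimately show ?thesis
    using assms(6) by simp
qed

lemma has_letter_squareI:
  assumes "Suc p < length w" "w ! p = w ! Suc p"
  shows "has_letter_square w"
proof -
  have "w = take p w @ [w ! p, w ! Suc p] @ drop (Suc (Suc p)) w"
    using assms(1) by (simp add: Cons_nth_drop_Suc)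
  then show ?thesis
    unfolding has_letter_square_def sublist_def using assms(2) by metis
qed

lemma is_embedding_shift_left:
  assumes "is_embedding u w (xs @ q # ys)" "is_embedding u w (xs @ p # zs)" "p < q"
  shows "is_embedding u w (xs @ p # ys)"
proof -
  have "length zs = length ys" and "w ! p = w ! q"
    using assms(1,2) unfolding is_embedding_iff by (auto dest: arg_cong[of _ _ length])
  then show ?thesis
    using assms unfolding is_embedding_iff by (auto simp: sorted_wrt_append)
qed

lemma has_letter_square_if_shift_keeps_complement:
  assumes "is_embedding u w (xs @ q # ys)" "is_embedding u w (xs @ p # zs)" "p < q"
    and "nths w (- set (xs @ q # ys)) = nths w (- set (xs @ p # ys))"
  shows "has_letter_square w"
proof -
  have sorted: "\<forall>x\<in>set xs. x < p" "\<forall>y\<in>set ys. q < y" "q < length w"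
    using assms(1,2) unfolding is_embedding_iff by (auto simp: sorted_wrt_append)
  have "w ! p = w ! Suc p"
    using sorted assms(3)
    by (intro nth_eq_Suc_if_nths_complements_eq[OF _ _ _ _ _ assms(4)]) auto
  then show ?thesis
    using sorted assms(3) by (intro has_letter_squareI[of p]) auto
qed

lemma has_letter_square_if_complements_agree:
  assumes "e \<in> embeddings u w" "e' \<in> embeddings u w" "e \<noteq> e'"
    and "\<And>g. g \<in> embeddings u w \<Longrightarrow> nths w (- set g) = c"
  shows "has_letter_square w"
proof -
  have shift: "has_letter_square w"
    if "is_embedding u w (xs @ q # ys)" "is_embedding u w (xs @ p # zs)" "p < q" for xs p q ys zs
  proof (rule has_letter_square_if_shift_keeps_complement[OF that])
    have "is_embedding u w (xs @ p # ys)"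
      by (rule is_embedding_shift_left[OF that])
    with that(1) show "nths w (- set (xs @ q # ys)) = nths w (- set (xs @ p # ys))"
      by (metis assms(4) embeddings_def mem_Collect_eq)
  qed
  obtain xs d d' where d: "e = xs @ d" "e' = xs @ d'" "d = [] \<or> d' = [] \<or> hd d \<noteq> hd d'"
    using longest_common_prefix by blast
  have "length e = length e'"
    using assms(1,2) by (simp add: embeddings_def is_embedding_def)
  with d assms(3) obtain q ys p zs where "d = q # ys" "d' = p # zs" "q \<noteq> p"
    by (cases d; cases d') auto
  with d assms(1,2) show ?thesis
    by (cases "p < q") (auto intro: shift simp: embeddings_def)
qed

lemma mset_shuffle_set:
  assumes "w \<in> shuffle_set u v"
  shows "mset w = mset u + mset v"
proof -
  obtain e f where e: "is_embedding u w e" and f: "is_embedding v w f"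
    and disj: "set e \<inter> set f = {}" and cover: "set e \<union> set f = {..<length w}"
    using assms unfolding shuffle_set_def by blast
  have "mset e + mset f = mset [0..<length w]"
    using e f disj cover
    by (simp add: is_embedding_iff strict_sorted_iff flip: mset_set_set mset_set_Union lessThan_atLeast0)
  then have "image_mset ((!) w) (mset e + mset f) = mset w"
    by (metis map_nth mset_map)
  then show ?thesis
    using e f by (simp add: is_embedding_iff)
qed

lemma is_embedding_delete_position:
  assumes "j < length w"
  shows "is_embedding (take j w @ drop (Suc j) w) w ([0..<j] @ [Suc j..<length w])"
  using assms by (auto simp: is_embedding_iff sorted_wrt_append intro!: nth_equalityI)

lemma embeddings_across_letter_square:
  obtains e e' where "e \<in> embeddings (xs @ a # ys) (xs @ a # a # ys)"
    "e' \<in> embeddings (xs @ a # ys) (xs @ a # a # ys)" "e \<noteq> e'"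
proof -
  let ?w = "xs @ a # a # ys" and ?p = "length xs"
  have "is_embedding (xs @ a # ys) ?w ([0..<?p] @ [Suc ?p..<length ?w])"
    using is_embedding_delete_position[of ?p ?w] by simp
  moreover have "is_embedding (xs @ a # ys) ?w ([0..<Suc ?p] @ [Suc (Suc ?p)..<length ?w])"
    using is_embedding_delete_position[of "Suc ?p" ?w] by simp
  moreover have "[0..<?p] @ [Suc ?p..<length ?w] \<noteq> [0..<Suc ?p] @ [Suc (Suc ?p)..<length ?w]"
  proof -
    have "?p \<notin> set ([0..<?p] @ [Suc ?p..<length ?w])"
      and "?p \<in> set ([0..<Suc ?p] @ [Suc (Suc ?p)..<length ?w])"
      by auto
    then show ?thesis
      by metis
  qed
  ultimately show ?thesis
    using that by (simp add: embeddings_def)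
qed

lemma Cset_across_letter_square: "Cset (xs @ a # a # ys) (xs @ a # ys) = {[a]}"
proof -
  obtain e where "e \<in> embeddings (xs @ a # ys) (xs @ a # a # ys)"
    using embeddings_across_letter_square by metis
  then have "Cset (xs @ a # a # ys) (xs @ a # ys) \<noteq> {}"
    using complement_in_Cset by (fastforce simp: embeddings_def)
  moreover have "v = [a]" if "v \<in> Cset (xs @ a # a # ys) (xs @ a # ys)" for v
  proof -
    have "mset (xs @ a # a # ys) = mset (xs @ a # ys) + mset v"
      using that mset_shuffle_set unfolding Cset_def by blast
    then have "mset v = {#a#}"
      by simp
    then show "v = [a]"
      by simp
  qed
  ultimately show ?thesis
    by blast
qed

lemma card_embeddings_eq_1_if_square_free:
  assumes "\<not> has_letter_square w" "scattered_factor u w" "card (Cset w u) = 1"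
  shows "card (embeddings u w) = 1"
proof -
  obtain c e where C: "Cset w u = {c}" and e: "e \<in> embeddings u w"
    using assms(2,3) by (auto simp: scattered_factor_def card_1_singleton_iff)
  have "nths w (- set g) = c" if "g \<in> embeddings u w" for g
    using complement_in_Cset[of u w g] that C by (simp add: embeddings_def)
  then have "embeddings u w = {e}"
    using e has_letter_square_if_complements_agree assms(1) by blast
  then show ?thesis
    by simp
qed

theorem proposition30:
  fixes w :: "'a list"
  shows "\<not> has_letter_square w \<longleftrightarrow>
         (\<forall>u. scattered_factor u w \<and> card (Cset w u) = 1 \<longrightarrow> card (embeddings u w) = 1)"
proof
  assume "\<not> has_letter_square w"
  then show "\<forall>u. scattered_factor u w \<and> card (Cset w u) = 1 \<longrightarrow> card (embeddings u w) = 1"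
    using card_embeddings_eq_1_if_square_free by blast
next
  assume unique: "\<forall>u. scattered_factor u w \<and> card (Cset w u) = 1 \<longrightarrow> card (embeddings u w) = 1"
  show "\<not> has_letter_square w"
  proof
    assume "has_letter_square w"
    then obtain xs a ys where w: "w = xs @ a # a # ys"
      unfolding has_letter_square_def sublist_def by auto
    obtain e e' where e: "e \<in> embeddings (xs @ a # ys) w" "e' \<in> embeddings (xs @ a # ys) w" "e \<noteq> e'"
      using embeddings_across_letter_square unfolding w by metis
    moreover have "card (Cset w (xs @ a # ys)) = 1"
      by (simp add: w Cset_across_letter_square)
    ultimately have "card (embeddings (xs @ a # ys) w) = 1"
      using unique by (auto simp: scattered_factor_def)
    with e show False
      by (metis card_1_singletonE singletonD)
  qed
qed

end
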